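(* Let $(G_n)$ be a sequence of graphs with $\min_{v\in V}\delta_v=\omega(\log n)$, let $k\ge3$ be odd and $p_k^\star<p\le1$, and run the $(k,p,\mathcal B)$-Edge-Majority dynamics from the configuration in which every node is $\mathcal R$. Then there exists a constant $T=T(p,k)$ such that $\Pr(\tau\le T)=1-o(1)$.
   Context: $G_n=(V,E)$, $V=\{1,\dots,n\}$, $N(u)$ neighbourhood, $\delta_u=|N(u)|$, $\mathrm{vol}(S)=\sum_{v\in S}\delta_v$; asymptotics as $n\to\infty$. States in $\{\mathcal R,\mathcal B\}$; $B^{(t)}$ is the set of $\mathcal B$ nodes at round $t$, and $\tau=\inf\{t\ge0:\mathrm{vol}(B^{(t)})/\mathrm{vol}(V)>1/2\}$. $(k,p,\mathcal B)$-Edge-Majority: in each round $t\ge1$ every node $u$ independently samples $k$ neighbours uniformly with replacement; for each sampled $v$, independently, $u$ sees $v$ as $\mathcal B$ with probability $p$ and otherwise sees $v$'s true state at round $t-1$; $u$ adopts the state seen more often. $F_{p,k}(x)=\Pr[\mathrm{Bin}(k,(1-p)x)\ge(k+1)/2]$. $p_k^\star\in[1/9,1/2)$ is the (unique) value such that for $0\le p<p_k^\star$, $F_{p,k}(x)=x$ on $[0,1]$ has exactly three solutions, for $p=p_k^\star$ exactly two, and for $p>p_k^\star$ only $0$. *)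

theory Defs
  imports "HOL-Probability.Probability" "HOL-Library.Landau_Symbols"
begin

text \<open>A graph on V = {1..n} is given by an adjacency predicate G (only pairs in V matter).\<close>

definition nbrs :: "(nat \<Rightarrow> nat \<Rightarrow> bool) \<Rightarrow> nat \<Rightarrow> nat \<Rightarrow> nat set" where
  "nbrs G n u = {v \<in> {1..n}. G u v}"

definition deg :: "(nat \<Rightarrow> nat \<Rightarrow> bool) \<Rightarrow> nat \<Rightarrow> nat \<Rightarrow> nat" where
  "deg G n u = card (nbrs G n u)"

definition vol :: "(nat \<Rightarrow> nat \<Rightarrow> bool) \<Rightarrow> nat \<Rightarrow> nat set \<Rightarrow> real" where
  "vol G n S = (\<Sum>v\<in>S. real (deg G n v))"

definition simple_graph :: "nat \<Rightarrow> (nat \<Rightarrow> nat \<Rightarrow> bool) \<Rightarrow> bool" where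
  "simple_graph n G \<longleftrightarrow> (\<forall>u\<in>{1..n}. \<forall>v\<in>{1..n}. G u v = G v u) \<and> (\<forall>u\<in>{1..n}. \<not> G u u)"

fun rep_pmf :: "nat \<Rightarrow> 'a pmf \<Rightarrow> 'a list pmf" where
  "rep_pmf 0 P = return_pmf []"
| "rep_pmf (Suc k) P = bind_pmf P (\<lambda>x. map_pmf (\<lambda>xs. x # xs) (rep_pmf k P))"

text \<open>States: the set B of blue nodes. True = seen as blue.
  A sampled neighbour v is seen as B with probability p, otherwise its true state.\<close>
definition seen_blue :: "real \<Rightarrow> nat set \<Rightarrow> nat \<Rightarrow> bool pmf" where
  "seen_blue p B v = map_pmf (\<lambda>c. c \<or> v \<in> B) (bernoulli_pmf p)"

definition sample_view :: "(nat \<Rightarrow> nat \<Rightarrow> bool) \<Rightarrow> nat \<Rightarrow> real \<Rightarrow> nat set \<Rightarrow> nat \<Rightarrow> bool pmf" where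
  "sample_view G n p B u = bind_pmf (pmf_of_set (nbrs G n u)) (seen_blue p B)"

definition node_update :: "nat \<Rightarrow> real \<Rightarrow> (nat \<Rightarrow> nat \<Rightarrow> bool) \<Rightarrow> nat \<Rightarrow> nat set \<Rightarrow> nat \<Rightarrow> bool pmf" where
  "node_update k p G n B u =
     map_pmf (\<lambda>obs. length (filter (\<lambda>b. \<not> b) obs) < length (filter id obs))
             (rep_pmf k (sample_view G n p B u))"

definition round_step :: "nat \<Rightarrow> real \<Rightarrow> (nat \<Rightarrow> nat \<Rightarrow> bool) \<Rightarrow> nat \<Rightarrow> nat set \<Rightarrow> nat set pmf" where
  "round_step k p G n B =
     map_pmf (\<lambda>f. {u \<in> {1..n}. f u}) (Pi_pmf {1..n} False (node_update k p G n B))"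

fun trajectory :: "nat \<Rightarrow> real \<Rightarrow> (nat \<Rightarrow> nat \<Rightarrow> bool) \<Rightarrow> nat \<Rightarrow> nat set \<Rightarrow> nat \<Rightarrow> nat set list pmf" where
  "trajectory k p G n B0 0 = return_pmf [B0]"
| "trajectory k p G n B0 (Suc t) =
     bind_pmf (trajectory k p G n B0 t)
       (\<lambda>xs. map_pmf (\<lambda>B'. xs @ [B']) (round_step k p G n (last xs)))"

text \<open>Pr(tau \<le> T) starting from the all-R configuration (B^(0) = {}).\<close>
definition prob_tau_le :: "nat \<Rightarrow> real \<Rightarrow> (nat \<Rightarrow> nat \<Rightarrow> bool) \<Rightarrow> nat \<Rightarrow> nat \<Rightarrow> real" where
  "prob_tau_le k p G n T =
     measure_pmf.prob (trajectory k p G n {} T)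
       {xs. \<exists>B\<in>set xs. vol G n B / vol G n {1..n} > 1/2}"

definition F :: "real \<Rightarrow> nat \<Rightarrow> real \<Rightarrow> real" where
  "F p k x = measure_pmf.prob (binomial_pmf k ((1 - p) * x)) {j. real j \<ge> (real k + 1) / 2}"

definition fixpoints :: "real \<Rightarrow> nat \<Rightarrow> real set" where
  "fixpoints p k = {x \<in> {0..1}. F p k x = x}"

definition pstar :: "nat \<Rightarrow> real" where
  "pstar k = (THE q. q \<in> {1/9..<1/2}
      \<and> (\<forall>p. 0 \<le> p \<and> p < q \<longrightarrow> finite (fixpoints p k) \<and> card (fixpoints p k) = 3)
      \<and> finite (fixpoints q k) \<and> card (fixpoints q k) = 2
      \<and> (\<forall>p. q < p \<and> p \<le> 1 \<longrightarrow> fixpoints p k = {0}))"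

end

theory Submission
  imports Defs
begin

(*
  Call the red fraction of a node the share of its neighbours outside the blue set B. A node
  with red fraction r turns red with probability F p k r, independently of all other nodes.
  Hence, by Hoeffding's inequality and a union bound, if every red fraction is at most a, then
  after one round every red fraction is at most F p k a + \<epsilon>, except with probability
  n exp (-2 \<epsilon>^2 d), where d is the minimum degree.

  For k = 2m+1 we have F p k x = majority m ((1-p) x), where majority m y = Pr[Bin(2m+1, y) > m].
  The ratio majority m y / y is unimodal with maximum M \<in> [9/8, 2), which identifies pstar k = 1 - 1/M. For p > pstar k,
  0 is the only fixed point of F p k, so F p k x \<le> x - 1/N on [1/2, 1] for some N. Starting
  from the all-red configuration (a = 1), after N+1 rounds every red fraction is below 1/2, and
  double counting the edges shows that the blue nodes then carry more than half of the volume.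
  Since d = \<omega>(log n), the failure probability (N+1) n exp (-2 \<epsilon>^2 d) tends to 0.
*)

section \<open>Binomial tails\<close>

lemma DERIV_Bernstein_Suc:
  "(Bernstein (Suc n) (Suc i) has_real_derivative
      real (Suc n) * (Bernstein n i y - Bernstein n (Suc i) y)) (at y)"
proof -
  define C where "C = real (Suc n choose Suc i)"
  have C_Suc: "C * real (Suc i) = real (Suc n) * real (n choose i)"
    unfolding C_def by (metis Suc_times_binomial mult.commute of_nat_mult)
  have C_diff: "C * real (n - i) = real (Suc n) * real (n choose Suc i)"
    using binomial_absorb_comp[of "Suc n" "Suc i"] unfolding C_def
    by (metis diff_Suc_1 diff_Suc_Suc mult.commute of_nat_mult)
  have "(Bernstein (Suc n) (Suc i) has_real_derivative
      C * real (Suc i) * (y^i * (1-y)^(n-i)) - C * real (n-i) * (y^Suc i * (1-y)^(n - Suc i))) (at y)"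
    unfolding Bernstein_def C_def[symmetric] diff_Suc_Suc
    by (rule derivative_eq_intros refl)+ (simp add: algebra_simps)
  then show ?thesis
    unfolding C_Suc C_diff by (simp add: Bernstein_def algebra_simps)
qed

definition binomial_tail :: "nat \<Rightarrow> nat \<Rightarrow> real \<Rightarrow> real" where
  "binomial_tail n j y = (\<Sum>i=j..n. Bernstein n i y)"

lemma DERIV_binomial_tail_Suc:
  "(binomial_tail (Suc n) (Suc j) has_real_derivative real (Suc n) * Bernstein n j y) (at y)"
proof (cases "j \<le> n")
  case True
  have tail: "binomial_tail (Suc n) (Suc j) = (\<lambda>y. \<Sum>i=j..n. Bernstein (Suc n) (Suc i) y)"
    by (rule ext) (simp only: binomial_tail_def sum.shift_bounds_cl_Suc_ivl)
  have "(binomial_tail (Suc n) (Suc j) has_real_derivative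
      (\<Sum>i=j..n. real (Suc n) * (Bernstein n i y - Bernstein n (Suc i) y))) (at y)"
    unfolding tail by (intro DERIV_sum DERIV_Bernstein_Suc)
  also have "(\<Sum>i=j..n. real (Suc n) * (Bernstein n i y - Bernstein n (Suc i) y))
      = real (Suc n) * (Bernstein n j y - Bernstein n (Suc n) y)"
    using sum_Suc_diff[of j n "\<lambda>i. - Bernstein n i y"] True by (simp flip: sum_distrib_left)
  finally show ?thesis by (simp add: Bernstein_def binomial_eq_0)
next
  case False
  then have "binomial_tail (Suc n) (Suc j) = (\<lambda>_. 0)"
    by (simp add: binomial_tail_def fun_eq_iff)
  then show ?thesis
    using False by (simp add: Bernstein_def binomial_eq_0)
qed

lemma prob_binomial_pmf_atLeast:
  assumes "0 \<le> y" "y \<le> 1"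
  shows "measure_pmf.prob (binomial_pmf n y) {i. j \<le> i} = binomial_tail n j y"
proof -
  have "measure_pmf.prob (binomial_pmf n y) {i. j \<le> i} = measure_pmf.prob (binomial_pmf n y) {j..n}"
    by (rule measure_prob_cong_0) (auto simp: assms)
  also have "\<dots> = binomial_tail n j y"
    by (simp add: measure_measure_pmf_finite assms binomial_tail_def Bernstein_def)
  finally show ?thesis .
qed

section \<open>The majority function\<close>

definition majority :: "nat \<Rightarrow> real \<Rightarrow> real" where
  "majority m = binomial_tail (Suc (2*m)) (Suc m)"

definition majority_density :: "nat \<Rightarrow> real \<Rightarrow> real" where
  "majority_density m y = real (Suc (2*m)) * real (2*m choose m) * (y * (1-y))^m"

lemma DERIV_majority: "(majority m has_real_derivative majority_density m y) (at y)"
proof -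
  have "real (Suc (2*m)) * Bernstein (2*m) m y = majority_density m y"
    by (simp add: Bernstein_def majority_density_def power_mult_distrib)
  then show ?thesis
    using DERIV_binomial_tail_Suc[of "2*m" m y] by (simp add: majority_def)
qed

lemma continuous_on_majority: "continuous_on S (majority m)"
  by (meson DERIV_isCont DERIV_majority continuous_at_imp_continuous_on)

lemma prob_binomial_pmf_majority:
  "0 \<le> y \<Longrightarrow> y \<le> 1 \<Longrightarrow> measure_pmf.prob (binomial_pmf (Suc (2*m)) y) {i. Suc m \<le> i} = majority m y"
  by (simp add: majority_def prob_binomial_pmf_atLeast)

lemma majority_0 [simp]: "majority m 0 = 0"
  by (simp add: majority_def binomial_tail_def Bernstein_def)

lemma majority_1 [simp]: "majority m 1 = 1"
proof -
  have "majority m 1 = (\<Sum>i=Suc m..Suc (2*m). if i = Suc (2*m) then 1 else 0)"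
    unfolding majority_def binomial_tail_def Bernstein_def by (rule sum.cong) auto
  then show ?thesis by simp
qed

lemma majority_density_sym: "majority_density m (1-y) = majority_density m y"
  by (simp add: majority_density_def mult.commute)

lemma majority_sym: "majority m y + majority m (1-y) = 1"
proof -
  have "((\<lambda>x. majority m x + majority m (1-x)) has_real_derivative
      majority_density m x + majority_density m (1-x) * (0 - 1)) (at x)" for x
    by (rule derivative_eq_intros DERIV_majority DERIV_chain2[OF DERIV_majority] refl)+
  then have "((\<lambda>x. majority m x + majority m (1-x)) has_real_derivative 0) (at x)" for x
    by (simp add: majority_density_sym)
  then show ?thesis
    using DERIV_isconst_all[of "\<lambda>x. majority m x + majority m (1-x)" y 0] by simp
qed

lemma majority_half [simp]: "majority m (1/2) = 1/2"
  using majority_sym[of m "1/2"] by simp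

lemma majority_mono: "0 \<le> a \<Longrightarrow> a \<le> b \<Longrightarrow> b \<le> 1 \<Longrightarrow> majority m a \<le> majority m b"
  by (rule DERIV_nonneg_imp_nondecreasing[of a b])
     (auto intro!: DERIV_majority simp: majority_density_def)

lemma majority_le_1: "0 \<le> y \<Longrightarrow> y \<le> 1 \<Longrightarrow> majority m y \<le> 1"
  using majority_mono[of y 1 m] by simp

lemma majority_density_strict_mono:
  assumes "1 \<le> m"
  shows "strict_mono_on {0..1/2} (majority_density m)"
proof (rule strict_mono_onI)
  fix a b :: real assume ab: "a \<in> {0..1/2}" "b \<in> {0..1/2}" "a < b"
  have "b * (1-b) - a * (1-a) = (b-a) * (1-a-b)"
    by (simp add: algebra_simps)
  moreover have "0 < (b-a) * (1-a-b)"
    using ab by (intro mult_pos_pos) auto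
  ultimately have "a * (1-a) < b * (1-b)"
    by linarith
  moreover have "0 \<le> a * (1-a)"
    using ab by simp
  ultimately have "(a * (1-a))^m < (b * (1-b))^m"
    using assms by (intro power_strict_mono) auto
  then show "majority_density m a < majority_density m b"
    by (simp add: majority_density_def)
qed

lemma majority_density_strict_antimono:
  assumes "1 \<le> m"
  shows "strict_antimono_on {1/2..1} (majority_density m)"
proof (rule monotone_onI)
  fix a b :: real assume "a \<in> {1/2..1}" "b \<in> {1/2..1}" "a < b"
  then have "1-b \<in> {0..1/2}" "1-a \<in> {0..1/2}" "1-b < 1-a" by auto
  then show "majority_density m b < majority_density m a"
    using strict_mono_onD[OF majority_density_strict_mono[OF assms]] by (metis majority_density_sym)
qed

lemma majority_excess_strict_mono:
  assumes "1 \<le> m"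
  shows "strict_mono_on {0..1/2} (\<lambda>y. y * majority_density m y - majority m y)"
proof (rule strict_mono_onI)
  fix a b :: real assume ab: "a \<in> {0..1/2}" "b \<in> {0..1/2}" "a < b"
  note density_less = strict_mono_onD[OF majority_density_strict_mono[OF assms]]
  obtain z where z: "a < z" "z < b" "majority m b - majority m a = (b - a) * majority_density m z"
    using MVT2[OF ab(3), of "majority m" "majority_density m"] DERIV_majority by blast
  have "(b - a) * majority_density m z < (b - a) * majority_density m b"
    using density_less[of z b] z ab by simp
  moreover have "a * majority_density m a \<le> a * majority_density m b"
    using density_less[of a b] ab by (intro mult_left_mono) auto
  ultimately show "a * majority_density m a - majority m a < b * majority_density m b - majority m b"
    using z(3) by (simp add: algebra_simps)
qed

lemma majority_excess_strict_antimono: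
  assumes "1 \<le> m"
  shows "strict_antimono_on {1/2..1} (\<lambda>y. y * majority_density m y - majority m y)"
proof (rule monotone_onI)
  fix a b :: real assume ab: "a \<in> {1/2..1}" "b \<in> {1/2..1}" "a < b"
  note density_less = monotone_onD[OF majority_density_strict_antimono[OF assms]]
  obtain z where z: "a < z" "z < b" "majority m b - majority m a = (b - a) * majority_density m z"
    using MVT2[OF ab(3), of "majority m" "majority_density m"] DERIV_majority by blast
  have "(b - a) * majority_density m b < (b - a) * majority_density m z"
    using density_less[of z b] z ab by simp
  moreover have "a * majority_density m b \<le> a * majority_density m a"
    using density_less[of a b] ab by (intro mult_left_mono) auto
  ultimately show "b * majority_density m b - majority m b < a * majority_density m a - majority m a"
    using z(3) by (simp add: algebra_simps)
qed

lemma DERIV_majority_ratio: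
  "y \<noteq> 0 \<Longrightarrow> ((\<lambda>y. majority m y / y) has_real_derivative
     (y * majority_density m y - majority m y) / y^2) (at y)"
  by (rule derivative_eq_intros DERIV_majority refl | simp)+ (simp add: algebra_simps power2_eq_square)

text \<open>The derivative of majority m y / y has the sign of
  y * majority_density m y - majority m y, which increases on [0, 1/2] and
  decreases on [1/2, 1].\<close>

lemma majority_ratio_unimodal:
  assumes "1 \<le> m"
  obtains c where "1/2 < c" "c < 1"
    "strict_mono_on {0<..c} (\<lambda>y. majority m y / y)"
    "strict_antimono_on {c..1} (\<lambda>y. majority m y / y)"
proof -
  define e where "e y = y * majority_density m y - majority m y" for y
  note e_up = strict_mono_onD[OF majority_excess_strict_mono[OF assms], folded e_def]
  note e_down = monotone_onD[OF majority_excess_strict_antimono[OF assms], folded e_def]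
  have e_half: "0 < e (1/2)" using e_up[of 0 "1/2"] by (simp add: e_def)
  have e_1: "e 1 < 0" using assms by (simp add: e_def majority_density_def zero_power)
  have "continuous_on {1/2..1} e"
    unfolding e_def majority_density_def by (intro continuous_intros continuous_on_majority)
  then obtain c where c: "1/2 \<le> c" "c \<le> 1" "e c = 0"
    using IVT2'[of e 1 0 "1/2"] e_half e_1 by force
  have c_bounds: "1/2 < c" "c < 1"
    using c e_half e_1 by (metis order.not_eq_order_implies_strict less_irrefl)+
  have e_pos: "0 < e y" if "0 < y" "y < c" for y
  proof (cases "y \<le> 1/2")
    case True then show ?thesis using e_up[of 0 y] that by (simp add: e_def)
  next
    case False then show ?thesis using e_down[of y c] that c by auto
  qed
  have e_neg: "e y < 0" if "c < y" "y \<le> 1" for y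
    using e_down[of c y] that c c_bounds by auto
  have ratio_deriv: "((\<lambda>y. majority m y / y) has_real_derivative e y / y^2) (at y)" if "y \<noteq> 0" for y
    unfolding e_def by (rule DERIV_majority_ratio[OF that])
  have ratio_cont: "continuous_on {a..b} (\<lambda>y. majority m y / y)" if "0 < a" for a b
    using that by (intro continuous_intros continuous_on_majority) auto
  show thesis
  proof (rule that[OF c_bounds])
    show "strict_mono_on {0<..c} (\<lambda>y. majority m y / y)"
    proof (rule strict_mono_onI)
      fix a b :: real assume ab: "a \<in> {0<..c}" "b \<in> {0<..c}" "a < b"
      show "majority m a / a < majority m b / b"
      proof (rule DERIV_pos_imp_increasing_open[OF ab(3) _ ratio_cont])
        fix x assume "a < x" "x < b"
        then show "\<exists>d. ((\<lambda>y. majority m y / y) has_real_derivative d) (at x) \<and> 0 < d"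
          using ab e_pos[of x] ratio_deriv[of x] by auto
      qed (use ab in auto)
    qed
    show "strict_antimono_on {c..1} (\<lambda>y. majority m y / y)"
    proof (rule monotone_onI)
      fix a b :: real assume ab: "a \<in> {c..1}" "b \<in> {c..1}" "a < b"
      show "majority m b / b < majority m a / a"
      proof (rule DERIV_neg_imp_decreasing_open[OF ab(3) _ ratio_cont])
        fix x assume "a < x" "x < b"
        then show "\<exists>d. ((\<lambda>y. majority m y / y) has_real_derivative d) (at x) \<and> d < 0"
          using ab c_bounds e_neg[of x] ratio_deriv[of x]
          by (intro exI[of _ "e x / x^2"]) (auto intro: divide_neg_pos)
      qed (use ab c_bounds in auto)
    qed
  qed
qed

text \<open>Condorcet's jury theorem. The difference D of the two sides vanishes at 1/2 and at 1,
  and its derivative changes sign at most once on [1/2, 1].\<close>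

lemma majority_le_majority_Suc:
  assumes "1/2 \<le> y" "y \<le> 1"
  shows "majority m y \<le> majority (Suc m) y"
proof -
  define D where "D t = majority (Suc m) t - majority m t" for t
  define K where "K = real (Suc (2*m)) * real (2*m choose m)"
  define K' where "K' = real (Suc (2 * Suc m)) * real (2 * Suc m choose Suc m)"
  have D_deriv: "(D has_real_derivative (t*(1-t))^m * (K' * (t*(1-t)) - K)) (at t)" for t
  proof -
    have "majority_density (Suc m) t - majority_density m t = (t*(1-t))^m * (K' * (t*(1-t)) - K)"
      unfolding majority_density_def K_def K'_def[symmetric] power_Suc by (simp add: algebra_simps)
    moreover have "(D has_real_derivative majority_density (Suc m) t - majority_density m t) (at t)"
      unfolding D_def[abs_def] by (intro derivative_intros DERIV_majority)
    ultimately show ?thesis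
      by simp
  qed
  have K'_nonneg: "0 \<le> K'" by (simp add: K'_def)
  have peak: "t*(1-t) - s*(1-s) = (s-t)*(s+t-1)" for s t :: real
    by (simp add: algebra_simps)
  show ?thesis
  proof (cases "K \<le> K' * (y*(1-y))")
    case True
    have "D (1/2) \<le> D y"
    proof (rule DERIV_nonneg_imp_nondecreasing[OF assms(1)])
      fix t assume t: "1/2 \<le> t" "t \<le> y"
      have "0 \<le> (y-t)*(y+t-1)"
        using t by (intro mult_nonneg_nonneg) auto
      then have "y*(1-y) \<le> t*(1-t)"
        using peak[of t y] by linarith
      then have "K' * (y*(1-y)) \<le> K' * (t*(1-t))"
        using K'_nonneg by (rule mult_left_mono)
      then have "0 \<le> (t*(1-t))^m * (K' * (t*(1-t)) - K)"
        using True t assms by (intro mult_nonneg_nonneg) auto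
      then show "\<exists>d. (D has_real_derivative d) (at t) \<and> 0 \<le> d"
        using D_deriv by blast
    qed
    then show ?thesis by (simp add: D_def)
  next
    case False
    have "- D y \<le> - D 1"
    proof (rule DERIV_nonneg_imp_nondecreasing[OF assms(2)])
      fix t assume t: "y \<le> t" "t \<le> 1"
      have "0 \<le> (t-y)*(t+y-1)"
        using t assms by (intro mult_nonneg_nonneg) auto
      then have "t*(1-t) \<le> y*(1-y)"
        using peak[of y t] by linarith
      then have "K' * (t*(1-t)) \<le> K' * (y*(1-y))"
        using K'_nonneg by (rule mult_left_mono)
      then have "0 \<le> - ((t*(1-t))^m * (K' * (t*(1-t)) - K))"
        using False t assms by (auto intro!: mult_nonneg_nonpos)
      then show "\<exists>d. ((\<lambda>t. - D t) has_real_derivative d) (at t) \<and> 0 \<le> d"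
        using DERIV_minus[OF D_deriv[of t]] by blast
    qed
    then show ?thesis by (simp add: D_def)
  qed
qed

text \<open>This is what makes the maximum of majority m y / y at least 9/8,
  i.e. pstar at least 1/9; for m = 1 the bound is attained.\<close>

lemma majority_three_quarters: "1 \<le> m \<Longrightarrow> 27/32 \<le> majority m (3/4)"
proof (induction m rule: dec_induct)
  case base
  have "majority 1 (3/4) = Bernstein 3 2 (3/4) + Bernstein 3 3 (3/4)"
    by (simp add: majority_def binomial_tail_def numeral_3_eq_3 numeral_2_eq_2)
  also have "\<dots> = 27/32"
    by (simp add: Bernstein_def choose_two power_divide)
  finally show ?case by simp
next
  case (step m)
  then show ?case using majority_le_majority_Suc[of "3/4" m] by simp
qed

definition majority_ratio_level :: "nat \<Rightarrow> real \<Rightarrow> real set" where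
  "majority_ratio_level m L = {y \<in> {0<..1}. majority m y / y = L}"

lemma majority_ratio_levels:
  assumes "1 \<le> m"
  obtains M where "9/8 \<le> M" "M < 2"
    "\<And>L. 1 \<le> L \<Longrightarrow> L < M \<Longrightarrow> card (majority_ratio_level m L) = 2"
    "card (majority_ratio_level m M) = 1"
    "\<And>L. M < L \<Longrightarrow> majority_ratio_level m L = {}"
proof -
  define g where "g y = majority m y / y" for y
  obtain c where c: "1/2 < c" "c < 1"
    and up: "strict_mono_on {0<..c} g" and down: "strict_antimono_on {c..1} g"
    using majority_ratio_unimodal[OF assms] unfolding g_def[symmetric] by blast
  note up = strict_mono_onD[OF up] and down = monotone_onD[OF down]
  have g_less: "g y < g c" if "0 < y" "y \<le> 1" "y \<noteq> c" for y
    using up[of y c] down[of c y] that c by (cases y c rule: linorder_cases) auto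
  have g_le: "g y \<le> g c" if "0 < y" "y \<le> 1" for y
    using g_less[OF that] by (cases "y = c") auto
  have g_quarter: "g (1/4) < 1"
    using up[of "1/4" "1/2"] c by (simp add: g_def)
  have g_1: "g 1 = 1" by (simp add: g_def)
  have g_cont: "continuous_on {a..b} g" if "0 < a" for a b
    using that unfolding g_def by (intro continuous_intros continuous_on_majority) auto
  show thesis
  proof
    show "9/8 \<le> g c"
      using g_le[of "3/4"] majority_three_quarters[OF assms] by (simp add: g_def)
    have "g c \<le> 1/c"
      using majority_le_1[of c m] c by (simp add: g_def divide_right_mono)
    also have "1/c < 2"
      using c by (simp add: divide_less_eq)
    finally show "g c < 2" .
    show "card (majority_ratio_level m (g c)) = 1"
    proof -
      have "majority_ratio_level m (g c) = {c}"
        using g_less c by (force simp: majority_ratio_level_def g_def[symmetric])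
      then show ?thesis by simp
    qed
    show "majority_ratio_level m L = {}" if "g c < L" for L
      using g_le that by (force simp: majority_ratio_level_def g_def[symmetric])
    show "card (majority_ratio_level m L) = 2" if L: "1 \<le> L" "L < g c" for L
    proof -
      obtain y1 where y1: "1/4 \<le> y1" "y1 \<le> c" "g y1 = L"
        using IVT'[of g "1/4" L c] g_quarter L c g_cont[of "1/4" c] by auto
      obtain y2 where y2: "c \<le> y2" "y2 \<le> 1" "g y2 = L"
        using IVT2'[of g 1 L c] g_1 L c g_cont[of c 1] by auto
      have "y1 \<noteq> c" "y2 \<noteq> c" using y1 y2 L by auto
      have "majority_ratio_level m L = {y1, y2}"
      proof (intro equalityI subsetI)
        fix y assume "y \<in> majority_ratio_level m L"
        then have y: "0 < y" "y \<le> 1" "g y = L" by (auto simp: majority_ratio_level_def g_def)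
        show "y \<in> {y1, y2}"
        proof (cases "y \<le> c")
          case True
          then have "y = y1"
            using up[of y y1] up[of y1 y] y y1 by (cases y y1 rule: linorder_cases) auto
          then show ?thesis by simp
        next
          case False
          then have "y = y2"
            using down[of y y2] down[of y2 y] y y2 by (cases y y2 rule: linorder_cases) auto
          then show ?thesis by simp
        qed
      next
        fix y assume "y \<in> {y1, y2}"
        then show "y \<in> majority_ratio_level m L"
          using y1 y2 c by (auto simp: majority_ratio_level_def g_def)
      qed
      moreover have "y1 \<noteq> y2" using y1 y2 \<open>y1 \<noteq> c\<close> by auto
      ultimately show ?thesis by simp
    qed
  qed
qed

section \<open>The threshold pstar\<close>

lemma F_eq_majority:
  assumes "k = Suc (2*m)" "0 \<le> (1-p)*x" "(1-p)*x \<le> 1"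
  shows "F p k x = majority m ((1-p)*x)"
proof -
  have "{j. (real k + 1) / 2 \<le> real j} = {j. Suc m \<le> j}"
    using assms(1) by auto
  then show ?thesis
    using prob_binomial_pmf_majority assms by (simp add: F_def)
qed

lemma fixpoints_eq_majority_ratio_level:
  assumes k: "k = Suc (2*m)" and p: "0 \<le> p" "p < 1"
  shows "fixpoints p k = insert 0 ((\<lambda>y. y / (1-p)) ` majority_ratio_level m (1/(1-p)))"
proof -
  define c where "c = 1 - p"
  have c: "0 < c" "c \<le> 1" using p by (auto simp: c_def)
  have F_c: "F p k x = majority m (c*x)" if "0 \<le> x" "x \<le> 1" for x
    using F_eq_majority[OF k, of p x] that c by (simp add: c_def mult_le_one)
  show ?thesis unfolding c_def[symmetric]
  proof (intro equalityI subsetI)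
    fix x assume "x \<in> fixpoints p k"
    then have x: "0 \<le> x" "x \<le> 1" "majority m (c*x) = x"
      using F_c by (auto simp: fixpoints_def)
    show "x \<in> insert 0 ((\<lambda>y. y / c) ` majority_ratio_level m (1/c))"
    proof (cases "x = 0")
      case False
      then have "c*x \<in> majority_ratio_level m (1/c)"
        using x c by (auto simp: majority_ratio_level_def mult_le_one)
      moreover have "x = (c*x)/c" using c by simp
      ultimately show ?thesis by blast
    qed simp
  next
    fix x assume "x \<in> insert 0 ((\<lambda>y. y / c) ` majority_ratio_level m (1/c))"
    then consider "x = 0" | y where "y \<in> majority_ratio_level m (1/c)" "x = y/c" by blast
    then show "x \<in> fixpoints p k"
    proof cases
      case 1
      then show ?thesis using F_c[of 0] by (simp add: fixpoints_def)
    next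
      case 2
      then have y: "0 < y" "y \<le> 1" "majority m y = y / c"
        by (auto simp: majority_ratio_level_def field_simps)
      then have "x \<le> 1" using majority_le_1[of y m] 2 by simp
      moreover have "0 \<le> x" "c * x = y" using 2 y c by auto
      ultimately show ?thesis using F_c[of x] y 2 by (simp add: fixpoints_def)
    qed
  qed
qed

lemma card_fixpoints:
  assumes "k = Suc (2*m)" "0 \<le> p" "p < 1" "finite (majority_ratio_level m (1/(1-p)))"
  shows "finite (fixpoints p k) \<and> card (fixpoints p k) = Suc (card (majority_ratio_level m (1/(1-p))))"
proof -
  have "inj_on (\<lambda>y. y / (1-p)) (majority_ratio_level m (1/(1-p)))"
    using assms by (auto simp: inj_on_def)
  moreover have "0 \<notin> (\<lambda>y. y / (1-p)) ` majority_ratio_level m (1/(1-p))"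
    using assms by (auto simp: majority_ratio_level_def)
  ultimately show ?thesis
    using fixpoints_eq_majority_ratio_level[OF assms(1-3)] assms(4) by (simp add: card_image)
qed

lemma fixpoints_1: "k = Suc (2*m) \<Longrightarrow> fixpoints 1 k = {0}"
  using F_eq_majority[of k m 1] by (auto simp: fixpoints_def)

definition is_pstar :: "nat \<Rightarrow> real \<Rightarrow> bool" where
  "is_pstar k q \<longleftrightarrow> q \<in> {1/9..<1/2}
      \<and> (\<forall>p. 0 \<le> p \<and> p < q \<longrightarrow> finite (fixpoints p k) \<and> card (fixpoints p k) = 3)
      \<and> finite (fixpoints q k) \<and> card (fixpoints q k) = 2
      \<and> (\<forall>p. q < p \<and> p \<le> 1 \<longrightarrow> fixpoints p k = {0})"

lemma pstar_eq_The: "pstar k = (THE q. is_pstar k q)"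
  unfolding pstar_def is_pstar_def ..

lemma is_pstar_unique:
  assumes "is_pstar k q" "is_pstar k q'"
  shows "q = q'"
proof -
  have not_less: "\<not> r < r'" if "is_pstar k r" "is_pstar k r'" for r r'
  proof
    assume "r < r'"
    then have "card (fixpoints r k) = 3" using that by (auto simp: is_pstar_def)
    then show False using that(1) by (simp add: is_pstar_def)
  qed
  show ?thesis using not_less[OF assms] not_less[OF assms(2,1)] by linarith
qed

text \<open>The nonzero fixed points of F p k are the solutions y of majority m y / y = 1/(1-p),
  rescaled by 1/(1-p); hence the threshold is 1 - 1/M for the maximum M of that ratio.\<close>

lemma is_pstar_exists:
  assumes k: "k = Suc (2*m)" and m: "1 \<le> m"
  shows "\<exists>q. is_pstar k q"
proof -
  obtain M where M: "9/8 \<le> M" "M < 2"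
    and two: "\<And>L. 1 \<le> L \<Longrightarrow> L < M \<Longrightarrow> card (majority_ratio_level m L) = 2"
    and one: "card (majority_ratio_level m M) = 1"
    and none: "\<And>L. M < L \<Longrightarrow> majority_ratio_level m L = {}"
    using majority_ratio_levels[OF m] by blast
  define q where "q = 1 - 1/M"
  have q: "0 \<le> q" "q < 1" using M by (auto simp: q_def)
  have level_p: "1/(1-p) < M \<longleftrightarrow> p < q" "1/(1-p) = M \<longleftrightarrow> p = q" if "p < 1" for p
    using that M by (auto simp: q_def field_simps)
  have "is_pstar k q"
    unfolding is_pstar_def
  proof (intro conjI allI impI)
    show "q \<in> {1/9..<1/2}" using M by (auto simp: q_def field_simps)
  next
    fix p assume p: "0 \<le> p \<and> p < q"
    then have "p < 1" "1 \<le> 1/(1-p)" using q by (auto simp: le_divide_eq_1)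
    then have two_p: "card (majority_ratio_level m (1/(1-p))) = 2"
      using two level_p p by blast
    then have "finite (majority_ratio_level m (1/(1-p)))"
      by (metis card.infinite zero_neq_numeral)
    then show "finite (fixpoints p k)" "card (fixpoints p k) = 3"
      using card_fixpoints[OF k _ \<open>p < 1\<close>] two_p p by auto
  next
    have one_q: "card (majority_ratio_level m (1/(1-q))) = 1"
      using level_p[OF q(2)] one by simp
    then have "finite (majority_ratio_level m (1/(1-q)))"
      by (metis card.infinite zero_neq_one)
    then show "finite (fixpoints q k)" "card (fixpoints q k) = 2"
      using card_fixpoints[OF k q] one_q by auto
  next
    fix p assume p: "q < p \<and> p \<le> 1"
    show "fixpoints p k = {0}"
    proof (cases "p = 1")
      case True then show ?thesis using fixpoints_1[OF k] by simp
    next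
      case False
      then have "p < 1" "0 \<le> p" "M < 1/(1-p)"
        using p q level_p[of p] by auto
      then show ?thesis using fixpoints_eq_majority_ratio_level[OF k] none by simp
    qed
  qed
  then show ?thesis ..
qed

lemma is_pstar_pstar:
  assumes "odd k" "3 \<le> k"
  shows "is_pstar k (pstar k)"
proof -
  obtain m where k: "k = Suc (2*m)" using assms(1) by (metis oddE Suc_eq_plus1)
  then have "\<exists>!q. is_pstar k q"
    using is_pstar_exists[OF k] is_pstar_unique assms(2) by force
  then show ?thesis unfolding pstar_eq_The by (rule theI')
qed

lemma pstar_ge: "odd k \<Longrightarrow> 3 \<le> k \<Longrightarrow> 1/9 \<le> pstar k"
  using is_pstar_pstar by (simp add: is_pstar_def)

lemma continuous_fixpoint_free_below_diagonal:
  fixes f :: "real \<Rightarrow> real"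
  assumes cont: "continuous_on {0..1} f" and "f 1 \<le> 1"
    and no_fix: "\<And>x. 0 < x \<Longrightarrow> x \<le> 1 \<Longrightarrow> f x \<noteq> x" and "0 < a"
  obtains \<delta> where "0 < \<delta>" "\<And>x. a \<le> x \<Longrightarrow> x \<le> 1 \<Longrightarrow> f x \<le> x - \<delta>"
proof -
  have f_1: "f 1 < 1" using assms(2) no_fix[of 1] by linarith
  have below: "f x < x" if x: "0 < x" "x \<le> 1" for x
  proof (rule ccontr)
    assume "\<not> f x < x"
    then have "x < 1" "x < f x" using no_fix[OF x] f_1 x by (auto simp: less_eq_real_def)
    moreover have "continuous_on {x..1} (\<lambda>t. t - f t)"
      using x by (intro continuous_intros continuous_on_subset[OF cont]) auto
    ultimately obtain t where "x \<le> t" "t \<le> 1" "t - f t = 0"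
      using IVT'[of "\<lambda>t. t - f t" x 0 1] f_1 by auto
    then show False using no_fix[of t] x by auto
  qed
  show thesis
  proof (cases "a \<le> 1")
    case True
    have "continuous_on {a..1} (\<lambda>t. t - f t)"
      using \<open>0 < a\<close> by (intro continuous_intros continuous_on_subset[OF cont]) auto
    then obtain x0 where x0: "a \<le> x0" "x0 \<le> 1" and min: "\<And>x. a \<le> x \<Longrightarrow> x \<le> 1 \<Longrightarrow> x0 - f x0 \<le> x - f x"
      using continuous_attains_inf[of "{a..1}" "\<lambda>t. t - f t"] True by auto
    show thesis
    proof (rule that[of "x0 - f x0"])
      show "0 < x0 - f x0" using below[of x0] x0 \<open>0 < a\<close> by simp
      show "f x \<le> x - (x0 - f x0)" if "a \<le> x" "x \<le> 1" for x
        using min[OF that] by simp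
    qed
  next
    case False
    show thesis
      by (rule that[of 1]) (use False in linarith)+
  qed
qed

lemma continuous_on_F:
  assumes "k = Suc (2*m)" "0 \<le> p" "p \<le> 1"
  shows "continuous_on {0..1} (F p k)"
proof -
  have "continuous_on {0..1} (\<lambda>x::real. (1-p)*x)"
    by (intro continuous_intros)
  from continuous_on_compose[OF this continuous_on_majority]
  have "continuous_on {0..1} (\<lambda>x. majority m ((1-p)*x))"
    by (simp add: o_def)
  moreover have "F p k x = majority m ((1-p)*x)" if "x \<in> {0..1}" for x
    using that assms by (intro F_eq_majority) (auto intro: mult_le_one)
  ultimately show ?thesis
    by (subst continuous_on_cong[OF refl]) auto
qed

lemma F_mono:
  assumes "k = Suc (2*m)" "0 \<le> p" "p \<le> 1" "0 \<le> x" "x \<le> y" "y \<le> 1"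
  shows "F p k x \<le> F p k y"
proof -
  have "0 \<le> (1-p)*x" "(1-p)*x \<le> (1-p)*y" "(1-p)*y \<le> 1"
    using assms by (auto intro: mult_left_mono mult_le_one)
  then show ?thesis
    using assms(1) by (simp add: F_eq_majority majority_mono)
qed

lemma F_below_diagonal:
  assumes "odd k" "3 \<le> k" "pstar k < p" "p \<le> 1"
  obtains N :: nat where "1 \<le> N" "\<And>x. 1/2 \<le> x \<Longrightarrow> x \<le> 1 \<Longrightarrow> F p k x \<le> x - 1/N"
proof -
  obtain m where k: "k = Suc (2*m)" using assms(1) by (metis oddE Suc_eq_plus1)
  have p: "0 \<le> p" using pstar_ge[OF assms(1,2)] assms(3) by linarith
  have fix_0: "fixpoints p k = {0}"
    using is_pstar_pstar[OF assms(1,2)] assms(3,4) unfolding is_pstar_def by blast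
  have no_fix: "F p k x \<noteq> x" if "0 < x" "x \<le> 1" for x
  proof
    assume "F p k x = x"
    then have "x \<in> fixpoints p k" using that by (simp add: fixpoints_def)
    then show False using fix_0 that by simp
  qed
  have F_1: "F p k 1 \<le> 1"
    using F_eq_majority[OF k, of p 1] majority_le_1[of "1-p" m] assms(4) p by simp
  obtain \<delta> where "0 < \<delta>" and below: "\<And>x. 1/2 \<le> x \<Longrightarrow> x \<le> 1 \<Longrightarrow> F p k x \<le> x - \<delta>"
    by (rule continuous_fixpoint_free_below_diagonal[OF continuous_on_F[OF k p assms(4)] F_1 no_fix, of "1/2"])
       auto
  obtain N :: nat where N: "1/\<delta> < N" using reals_Archimedean2 by blast
  moreover have "0 < 1/\<delta>" using \<open>0 < \<delta>\<close> by simp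
  ultimately have "0 < real N" by linarith
  then have "1 \<le> N" "1/N < \<delta>"
    using N \<open>0 < \<delta>\<close> by (simp_all add: divide_less_eq mult.commute)
  then show thesis
    using below that by force
qed

section \<open>One round of the dynamics\<close>

lemma rep_pmf_eq_replicate_pmf: "rep_pmf k P = replicate_pmf k P"
  by (induction k) (simp_all add: map_pmf_def)

lemma replicate_pmf_map_pmf: "replicate_pmf n (map_pmf f p) = map_pmf (map f) (replicate_pmf n p)"
  by (induction n) (simp_all add: map_pmf_def bind_assoc_pmf bind_return_pmf)

lemma bool_pmf_eq_bernoulli_pmf: "q = bernoulli_pmf (pmf q True)"
proof (rule pmf_eqI)
  fix b :: bool
  show "pmf q b = pmf (bernoulli_pmf (pmf q True)) b"
    by (cases b) (simp_all add: pmf_le_1 pmf_False_conv_True[of q])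
qed

lemma map_pmf_count_replicate_pmf:
  "map_pmf (\<lambda>xs. length (filter P xs)) (replicate_pmf n q)
     = binomial_pmf n (measure_pmf.prob q {x. P x})"
proof -
  have "map_pmf (\<lambda>xs. length (filter P xs)) (replicate_pmf n q)
      = map_pmf (length \<circ> filter id) (map_pmf (map P) (replicate_pmf n q))"
    by (simp add: map_pmf_comp filter_map comp_def)
  also have "\<dots> = map_pmf (length \<circ> filter id) (replicate_pmf n (map_pmf P q))"
    by (simp add: replicate_pmf_map_pmf)
  also have "map_pmf P q = bernoulli_pmf (measure_pmf.prob q {x. P x})"
    by (subst bool_pmf_eq_bernoulli_pmf) (simp add: pmf_map vimage_def)
  also have "map_pmf (length \<circ> filter id) (replicate_pmf n (bernoulli_pmf (measure_pmf.prob q {x. P x})))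
      = binomial_pmf n (measure_pmf.prob q {x. P x})"
    by (rule binomial_pmf_altdef[symmetric]) simp
  finally show ?thesis .
qed

definition red_fraction :: "(nat \<Rightarrow> nat \<Rightarrow> bool) \<Rightarrow> nat \<Rightarrow> nat set \<Rightarrow> nat \<Rightarrow> real" where
  "red_fraction G n B u = real (card (nbrs G n u - B)) / real (deg G n u)"

lemma red_fraction_bounds: "0 \<le> red_fraction G n B u \<and> red_fraction G n B u \<le> 1"
proof -
  have "card (nbrs G n u - B) \<le> deg G n u"
    unfolding deg_def by (intro card_mono) (auto simp: nbrs_def)
  then show ?thesis unfolding red_fraction_def by (cases "deg G n u = 0") auto
qed

lemma prob_sample_view_red:
  assumes "0 \<le> p" "p \<le> 1" "nbrs G n u \<noteq> {}"
  shows "measure_pmf.prob (sample_view G n p B u) {x. \<not> x} = (1-p) * red_fraction G n B u"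
proof -
  have fin: "finite (nbrs G n u)" by (simp add: nbrs_def)
  have not_eq: "{x. \<not> x} = {False}" by auto
  have "pmf (seen_blue p B v) False = (if v \<in> B then 0 else 1 - p)" for v
    using assms by (simp add: seen_blue_def pmf_map vimage_def not_eq measure_pmf_single)
  then have "pmf (sample_view G n p B u) False
      = (\<Sum>v\<in>nbrs G n u. if v \<in> B then 0 else 1 - p) / card (nbrs G n u)"
    using fin assms(3) by (simp add: sample_view_def pmf_bind integral_pmf_of_set)
  also have "(\<Sum>v\<in>nbrs G n u. if v \<in> B then 0 else 1 - p) = (1-p) * card (nbrs G n u - B)"
    using fin by (simp add: sum.If_cases Diff_eq)
  finally show ?thesis by (simp add: not_eq measure_pmf_single red_fraction_def deg_def)
qed

lemma prob_node_update_red: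
  assumes k: "k = Suc (2*m)" and "0 \<le> p" "p \<le> 1" "nbrs G n u \<noteq> {}"
  shows "measure_pmf.prob (node_update k p G n B u) {False} = F p k (red_fraction G n B u)"
proof -
  define q where "q = sample_view G n p B u"
  have "node_update k p G n B u
      = map_pmf (\<lambda>j. j \<le> m) (map_pmf (\<lambda>obs. length (filter Not obs)) (replicate_pmf k q))"
    unfolding node_update_def q_def[symmetric] rep_pmf_eq_replicate_pmf map_pmf_comp
  proof (rule map_pmf_cong[OF refl])
    fix obs assume "obs \<in> set_pmf (replicate_pmf k q)"
    then have "length obs = k" by (simp add: set_replicate_pmf)
    moreover have "length (filter id obs) + length (filter Not obs) = length obs"
      using sum_length_filter_compl[of id obs] by (simp add: comp_def id_def)
    ultimately show "(length (filter (\<lambda>b. \<not> b) obs) < length (filter id obs))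
        = (length (filter Not obs) \<le> m)"
      using k by auto
  qed
  also have "map_pmf (\<lambda>obs. length (filter Not obs)) (replicate_pmf k q)
      = binomial_pmf k ((1-p) * red_fraction G n B u)"
    using map_pmf_count_replicate_pmf[of Not k q] prob_sample_view_red[OF assms(2-4)]
    by (simp add: q_def)
  finally have "measure_pmf.prob (node_update k p G n B u) {False}
      = measure_pmf.prob (binomial_pmf k ((1-p) * red_fraction G n B u)) {j. \<not> j \<le> m}"
    by (simp add: vimage_def)
  also have "{j. \<not> j \<le> m} = {j. (real k + 1) / 2 \<le> real j}"
    using k by auto
  finally show ?thesis by (simp add: F_def)
qed

lemma prob_Pi_pmf_many_False:
  fixes P :: "'a \<Rightarrow> bool pmf"
  assumes I: "finite I" "N \<subseteq> I" "N \<noteq> {}" and "0 \<le> \<epsilon>"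
    and q: "\<And>u. u \<in> N \<Longrightarrow> measure_pmf.prob (P u) {False} \<le> q"
  shows "measure_pmf.prob (Pi_pmf I d P) {f. (q + \<epsilon>) * card N < card {u\<in>N. \<not> f u}}
           \<le> exp (-2 * \<epsilon>^2 * card N)"
proof -
  define M where "M = Pi_pmf I d P"
  define X where "X = (\<lambda>u (f :: 'a \<Rightarrow> bool). of_bool (\<not> f u) :: real)"
  have finN: "finite N" using I finite_subset by blast
  have EX: "measure_pmf.expectation M (X u) = measure_pmf.prob (P u) {False}" if "u \<in> N" for u
  proof -
    have "measure_pmf.expectation M (X u)
        = measure_pmf.expectation (map_pmf (\<lambda>f. f u) M) (\<lambda>b. of_bool (\<not> b))"
      by (simp add: X_def)
    also have "map_pmf (\<lambda>f. f u) M = P u"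
      using that I by (auto simp: M_def Pi_pmf_component)
    also have "(\<lambda>b. of_bool (\<not> b) :: real) = indicator {False}"
      by (auto simp: indicator_def)
    finally show ?thesis by simp
  qed
  define \<mu> where "\<mu> = (\<Sum>u\<in>N. measure_pmf.expectation M (X u))"
  have \<mu>_le: "\<mu> \<le> q * card N"
  proof -
    have "\<mu> \<le> (\<Sum>u\<in>N. q)" unfolding \<mu>_def using EX q by (intro sum_mono) auto
    then show ?thesis by (simp add: mult.commute)
  qed
  interpret H: Hoeffding_ineq "measure_pmf M" N X "\<lambda>_. 0" "\<lambda>_. 1" \<mu>
  proof unfold_locales
    have "prob_space.indep_vars (measure_pmf M) (\<lambda>_. count_space UNIV) (\<lambda>x f. f x) I"
      unfolding M_def by (rule indep_vars_Pi_pmf[OF I(1)])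
    then have "prob_space.indep_vars (measure_pmf M) (\<lambda>_. count_space UNIV) (\<lambda>x f. f x) N"
      using I(2) by (rule prob_space.indep_vars_subset[OF measure_pmf.prob_space_axioms])
    from prob_space.indep_vars_compose2[OF measure_pmf.prob_space_axioms this,
        of "\<lambda>_ b. of_bool (\<not> b) :: real" "\<lambda>_. borel"]
    show "prob_space.indep_vars (measure_pmf M) (\<lambda>_. borel) X N"
      by (simp add: X_def)
  qed (simp_all add: finN \<mu>_def X_def)
  have count: "real (card {u\<in>N. \<not> f u}) = (\<Sum>u\<in>N. X u f)" for f
    using finN by (simp add: X_def Int_def)
  have "measure_pmf.prob M {f. (q + \<epsilon>) * card N < card {u\<in>N. \<not> f u}}
      \<le> measure_pmf.prob M {f\<in>space (measure_pmf M). \<mu> + \<epsilon> * card N \<le> (\<Sum>u\<in>N. X u f)}"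
    using \<mu>_le count by (intro measure_pmf.finite_measure_mono) (auto simp: algebra_simps)
  also have "\<dots> \<le> exp (-2 * (\<epsilon> * card N)^2 / (\<Sum>u\<in>N. (1 - 0)^2))"
    using H.Hoeffding_ineq_ge[of "\<epsilon> * card N"] \<open>0 \<le> \<epsilon>\<close> I finN by (simp add: \<mu>_def card_gt_0_iff)
  also have "\<dots> = exp (-2 * \<epsilon>^2 * card N)"
    using I finN by (simp add: power2_eq_square)
  finally show ?thesis by (simp add: M_def)
qed

definition red_nbrs_le :: "(nat \<Rightarrow> nat \<Rightarrow> bool) \<Rightarrow> nat \<Rightarrow> real \<Rightarrow> nat set \<Rightarrow> bool" where
  "red_nbrs_le G n a B \<longleftrightarrow>
     B \<subseteq> {1..n} \<and> (\<forall>w\<in>{1..n}. real (card (nbrs G n w - B)) \<le> a * real (deg G n w))"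

lemma red_nbrs_le_mono: "red_nbrs_le G n a B \<Longrightarrow> a \<le> a' \<Longrightarrow> red_nbrs_le G n a' B"
  unfolding red_nbrs_le_def by (meson order_trans mult_right_mono of_nat_0_le_iff)

lemma prob_round_step_red_nbrs_le:
  assumes k: "k = Suc (2*m)" and p: "0 \<le> p" "p \<le> 1" and "a \<le> 1" "0 \<le> \<epsilon>" "0 < d"
    and deg: "\<And>w. w \<in> {1..n} \<Longrightarrow> d \<le> deg G n w"
    and B: "red_nbrs_le G n a B"
  shows "measure_pmf.prob (round_step k p G n B) {B'. \<not> red_nbrs_le G n (F p k a + \<epsilon>) B'}
           \<le> n * exp (-2 * \<epsilon>^2 * d)"
proof -
  define M where "M = Pi_pmf {1..n} False (node_update k p G n B)"
  define A where "A w = {f. (F p k a + \<epsilon>) * card (nbrs G n w) < card {u\<in>nbrs G n w. \<not> f u}}" for w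
  have nbrs_ne: "nbrs G n w \<noteq> {}" if "w \<in> {1..n}" for w
    using deg[OF that] \<open>0 < d\<close> by (auto simp: deg_def)
  have red: "measure_pmf.prob (node_update k p G n B u) {False} \<le> F p k a" if u: "u \<in> {1..n}" for u
  proof -
    have "0 < real (deg G n u)"
      using deg[OF u] \<open>0 < d\<close> by linarith
    moreover have "real (card (nbrs G n u - B)) \<le> a * real (deg G n u)"
      using B u by (simp add: red_nbrs_le_def)
    ultimately have "red_fraction G n B u \<le> a"
      by (simp add: red_fraction_def divide_le_eq)
    then show ?thesis
      using prob_node_update_red[OF k p nbrs_ne[OF u]] F_mono[OF k p] red_fraction_bounds \<open>a \<le> 1\<close>
      by simp
  qed
  have "measure_pmf.prob (round_step k p G n B) {B'. \<not> red_nbrs_le G n (F p k a + \<epsilon>) B'}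
      = measure_pmf.prob M ((\<lambda>f. {u\<in>{1..n}. f u}) -` {B'. \<not> red_nbrs_le G n (F p k a + \<epsilon>) B'})"
    by (simp add: round_step_def M_def)
  also have "\<dots> \<le> measure_pmf.prob M (\<Union>w\<in>{1..n}. A w)"
  proof (rule measure_pmf.finite_measure_mono)
    have "nbrs G n w - {u\<in>{1..n}. f u} = {u\<in>nbrs G n w. \<not> f u}" for w f
      by (auto simp: nbrs_def)
    then show "(\<lambda>f. {u\<in>{1..n}. f u}) -` {B'. \<not> red_nbrs_le G n (F p k a + \<epsilon>) B'} \<subseteq> (\<Union>w\<in>{1..n}. A w)"
      by (auto simp: red_nbrs_le_def A_def deg_def not_le)
  qed simp
  also have "\<dots> \<le> (\<Sum>w\<in>{1..n}. measure_pmf.prob M (A w))"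
    by (rule measure_pmf.finite_measure_subadditive_finite) auto
  also have "\<dots> \<le> (\<Sum>w\<in>{1..n}. exp (-2 * \<epsilon>^2 * d))"
  proof (rule sum_mono)
    fix w assume w: "w \<in> {1..n}"
    have "measure_pmf.prob M (A w) \<le> exp (-2 * \<epsilon>^2 * card (nbrs G n w))"
      unfolding M_def A_def
      by (rule prob_Pi_pmf_many_False) (use w nbrs_ne red \<open>0 \<le> \<epsilon>\<close> in \<open>auto simp: nbrs_def\<close>)
    also have "\<dots> \<le> exp (-2 * \<epsilon>^2 * d)"
      using deg[OF w] by (simp add: deg_def mult_left_mono)
    finally show "measure_pmf.prob M (A w) \<le> exp (-2 * \<epsilon>^2 * d)" .
  qed
  also have "\<dots> = n * exp (-2 * \<epsilon>^2 * d)" by simp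
  finally show ?thesis .
qed

section \<open>Reaching a blue majority of the volume\<close>

lemma prob_bind_pmf_le:
  assumes "\<And>x. x \<in> set_pmf M \<Longrightarrow> x \<notin> A \<Longrightarrow> measure_pmf.prob (f x) C \<le> \<eta>" and "0 \<le> \<eta>"
  shows "measure_pmf.prob (bind_pmf M f) C \<le> measure_pmf.prob M A + \<eta>"
proof -
  have pointwise: "emeasure (f x) C \<le> indicator A x + ennreal \<eta>" if "x \<in> set_pmf M" for x
  proof (cases "x \<in> A")
    case True
    have "emeasure (f x) C \<le> 1" by (rule measure_pmf.emeasure_le_1)
    then show ?thesis using True by (simp add: add_increasing2)
  next
    case False
    then show ?thesis
      using assms(1)[OF that False] by (simp add: measure_pmf.emeasure_eq_measure ennreal_leI)
  qed
  have "ennreal (measure_pmf.prob (bind_pmf M f) C) = (\<integral>\<^sup>+x. emeasure (f x) C \<partial>M)"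
    by (simp add: measure_pmf.emeasure_eq_measure[symmetric])
  also have "\<dots> \<le> (\<integral>\<^sup>+x. indicator A x + ennreal \<eta> \<partial>M)"
    by (rule nn_integral_mono_AE) (simp add: AE_measure_pmf_iff pointwise)
  also have "\<dots> = ennreal (measure_pmf.prob M A + \<eta>)"
    using assms(2)
    by (simp add: nn_integral_add measure_pmf.emeasure_space_1 measure_pmf.emeasure_eq_measure)
  finally have "ennreal (measure_pmf.prob (bind_pmf M f) C) \<le> ennreal (measure_pmf.prob M A + \<eta>)" .
  then show ?thesis
    by (rule ennreal_le_iff[THEN iffD1, rotated]) (simp add: assms(2))
qed

lemma prob_trajectory_invariant_fails:
  assumes "Q 0 B0" and "0 \<le> \<eta>"
    and step: "\<And>t B. t < T \<Longrightarrow> Q t B \<Longrightarrow>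
        measure_pmf.prob (round_step k p G n B) {B'. \<not> Q (Suc t) B'} \<le> \<eta>"
  shows "t \<le> T \<Longrightarrow> measure_pmf.prob (trajectory k p G n B0 t) {xs. \<not> Q t (last xs)} \<le> t * \<eta>"
proof (induction t)
  case 0
  then show ?case using assms(1) by simp
next
  case (Suc t)
  have "measure_pmf.prob (trajectory k p G n B0 (Suc t)) {xs. \<not> Q (Suc t) (last xs)}
      \<le> measure_pmf.prob (trajectory k p G n B0 t) {xs. \<not> Q t (last xs)} + \<eta>"
    unfolding trajectory.simps
    by (rule prob_bind_pmf_le) (use step Suc.prems assms(2) in \<open>simp_all add: vimage_def\<close>)
  then show ?case
    using Suc by (simp add: algebra_simps)
qed

lemma trajectory_nonempty: "xs \<in> set_pmf (trajectory k p G n B0 t) \<Longrightarrow> xs \<noteq> []"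
  by (induction t arbitrary: xs) auto

lemma vol_ge_if_red_nbrs_le:
  assumes "simple_graph n G" and B: "red_nbrs_le G n a B"
  shows "(1 - a) * vol G n {1..n} \<le> vol G n B"
proof -
  define V where "V = {1..n}"
  have BV: "B \<subseteq> V" using B by (simp add: red_nbrs_le_def V_def)
  have nbrs_eq: "nbrs G n u - S = (V - S) \<inter> {v. G u v}" for u S
    by (auto simp: nbrs_def V_def)
  have "vol G n V - vol G n B = (\<Sum>v\<in>V - B. \<Sum>u\<in>V. of_bool (G v u))"
    unfolding vol_def deg_def using BV nbrs_eq[of _ "{}"] by (simp add: sum_diff V_def)
  also have "\<dots> = (\<Sum>u\<in>V. \<Sum>v\<in>V - B. of_bool (G u v))"
    using assms(1) BV unfolding sum.swap[of _ "V - B"]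
    by (intro sum.cong refl) (auto simp: simple_graph_def V_def)
  also have "\<dots> = (\<Sum>u\<in>V. real (card (nbrs G n u - B)))"
    by (simp add: nbrs_eq V_def)
  also have "\<dots> \<le> (\<Sum>u\<in>V. a * real (deg G n u))"
    using B by (intro sum_mono) (simp add: red_nbrs_le_def V_def)
  also have "\<dots> = a * vol G n V"
    by (simp add: vol_def sum_distrib_left)
  finally show ?thesis by (simp add: V_def algebra_simps)
qed

lemma prob_red_nbrs_le_le_prob_tau_le:
  assumes G: "simple_graph n G" and "1 \<le> n" and deg: "\<And>w. w \<in> {1..n} \<Longrightarrow> 0 < deg G n w"
    and "a < 1/2"
  shows "measure_pmf.prob (trajectory k p G n {} T) {xs. red_nbrs_le G n a (last xs)}
           \<le> prob_tau_le k p G n T"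
proof -
  define traj where "traj = trajectory k p G n {} T"
  have vol_pos: "0 < vol G n {1..n}"
    unfolding vol_def using deg \<open>1 \<le> n\<close> by (intro sum_pos) auto
  have "{xs. red_nbrs_le G n a (last xs)} \<inter> set_pmf traj
      \<subseteq> {xs. \<exists>B\<in>set xs. vol G n B / vol G n {1..n} > 1/2}"
  proof safe
    fix xs assume B: "red_nbrs_le G n a (last xs)" and xs: "xs \<in> set_pmf traj"
    have "vol G n {1..n} / 2 < (1 - a) * vol G n {1..n}"
      using mult_strict_right_mono[of "1/2" "1 - a", OF _ vol_pos] \<open>a < 1/2\<close> by simp
    then have "vol G n {1..n} / 2 < vol G n (last xs)"
      using vol_ge_if_red_nbrs_le[OF G B] by linarith
    moreover have "last xs \<in> set xs"
      using trajectory_nonempty[of xs] xs unfolding traj_def by (intro last_in_set) blast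
    ultimately show "\<exists>B\<in>set xs. vol G n B / vol G n {1..n} > 1/2"
      using vol_pos by (auto simp: field_simps)
  qed
  then show ?thesis
    unfolding prob_tau_le_def traj_def[symmetric]
    by (subst measure_Int_set_pmf[symmetric]) (rule measure_pmf.finite_measure_mono, auto)
qed

lemma prob_tau_le_lower_bound:
  assumes k: "k = Suc (2*m)" and p: "0 \<le> p" "p \<le> 1" and "1 \<le> N"
    and drift: "\<And>x. 1/2 \<le> x \<Longrightarrow> x \<le> 1 \<Longrightarrow> F p k x \<le> x - 1/N"
    and G: "simple_graph n G" and "1 \<le> n" "0 < d" and deg: "\<And>w. w \<in> {1..n} \<Longrightarrow> d \<le> deg G n w"
  shows "1 - Suc N * (n * exp (-2 * (1 / (2 * real N))^2 * d)) \<le> prob_tau_le k p G n (Suc N)"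
proof -
  define \<epsilon> where "\<epsilon> = 1 / (2 * real N)"
  define a where "a t = 1 - real t * \<epsilon>" for t
  define \<eta> where "\<eta> = n * exp (-2 * \<epsilon>^2 * d)"
  define Q where "Q t B = red_nbrs_le G n (a t) B" for t B
  define traj where "traj = trajectory k p G n {} (Suc N)"
  have "0 < \<epsilon>" using \<open>1 \<le> N\<close> by (simp add: \<epsilon>_def)
  have step: "measure_pmf.prob (round_step k p G n B) {B'. \<not> Q (Suc t) B'} \<le> \<eta>"
    if "t < Suc N" "Q t B" for t B
  proof -
    have at: "1/2 \<le> a t" "a t \<le> 1"
      using that(1) \<open>0 < \<epsilon>\<close> \<open>1 \<le> N\<close> by (auto simp: a_def \<epsilon>_def field_simps)
    moreover have "1 / real N = 2 * \<epsilon>" by (simp add: \<epsilon>_def)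
    moreover have "a (Suc t) = a t - \<epsilon>" by (simp add: a_def algebra_simps)
    ultimately have "F p k (a t) + \<epsilon> \<le> a (Suc t)"
      using drift[OF at] by linarith
    then have "{B'. \<not> Q (Suc t) B'} \<subseteq> {B'. \<not> red_nbrs_le G n (F p k (a t) + \<epsilon>) B'}"
      by (auto simp: Q_def intro: red_nbrs_le_mono)
    then have "measure_pmf.prob (round_step k p G n B) {B'. \<not> Q (Suc t) B'}
        \<le> measure_pmf.prob (round_step k p G n B) {B'. \<not> red_nbrs_le G n (F p k (a t) + \<epsilon>) B'}"
      by (rule measure_pmf.finite_measure_mono) simp
    also have "\<dots> \<le> \<eta>"
      unfolding \<eta>_def using that(2) \<open>0 < \<epsilon>\<close>
      by (intro prob_round_step_red_nbrs_le[OF k p at(2) _ \<open>0 < d\<close> deg]) (auto simp: Q_def)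
    finally show ?thesis .
  qed
  have "Q 0 {}" by (simp add: Q_def a_def red_nbrs_le_def deg_def)
  then have fail: "measure_pmf.prob traj {xs. \<not> Q (Suc N) (last xs)} \<le> Suc N * \<eta>"
    unfolding traj_def
    by (rule prob_trajectory_invariant_fails[where T="Suc N"]) (use step in \<open>auto simp: \<eta>_def\<close>)
  have "a (Suc N) < 1/2" using \<open>1 \<le> N\<close> by (simp add: a_def \<epsilon>_def field_simps)
  then have "measure_pmf.prob traj {xs. Q (Suc N) (last xs)} \<le> prob_tau_le k p G n (Suc N)"
    unfolding Q_def traj_def
    by (rule prob_red_nbrs_le_le_prob_tau_le[OF G \<open>1 \<le> n\<close>, rotated])
       (use deg \<open>0 < d\<close> in fastforce)
  moreover have "measure_pmf.prob traj {xs. Q (Suc N) (last xs)}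
      = 1 - measure_pmf.prob traj {xs. \<not> Q (Suc N) (last xs)}"
    by (subst measure_pmf.prob_compl[symmetric]) (auto simp: Compl_eq_Diff_UNIV[symmetric] Collect_neg_eq)
  ultimately show ?thesis
    using fail by (simp add: \<eta>_def \<epsilon>_def)
qed

lemma mult_exp_le_inverse:
  fixes x c :: real
  assumes "0 < x" "ln x \<le> c"
  shows "x * exp (-2 * c) \<le> 1 / x"
proof -
  have "x * x = exp (2 * ln x)"
    using assms(1) by (metis exp_add exp_ln mult_2)
  also have "\<dots> \<le> exp (2 * c)"
    using assms(2) by simp
  finally have "exp (-2 * c) \<le> 1 / (x * x)"
    using assms(1) by (simp add: exp_minus inverse_eq_divide divide_le_eq mult.commute)
  then have "x * exp (-2 * c) \<le> x * (1 / (x * x))"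
    using assms(1) by (intro mult_left_mono) auto
  then show ?thesis
    using assms(1) by simp
qed

lemma prob_tau_le_tendsto_1:
  assumes k: "k = Suc (2*m)" and p: "0 \<le> p" "p \<le> 1" and N: "1 \<le> N"
    and drift: "\<And>x. 1/2 \<le> x \<Longrightarrow> x \<le> 1 \<Longrightarrow> F p k x \<le> x - 1/N"
    and simple: "\<forall>n. simple_graph n (E n)"
    and min_deg: "(\<lambda>n. real (Min (deg (E n) n ` {1..n}))) \<in> \<omega>(\<lambda>n. ln (real n))"
  shows "(\<lambda>n. prob_tau_le k p (E n) n (Suc N)) \<longlonglongrightarrow> 1"
proof -
  define \<epsilon> where "\<epsilon> = 1 / (2 * real N)"
  define d where "d n = Min (deg (E n) n ` {1..n})" for n
  have "0 < \<epsilon>" using N by (simp add: \<epsilon>_def)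
  have "eventually (\<lambda>n. (1 / \<epsilon>^2) * norm (ln (real n)) \<le> norm (real (d n))) sequentially"
    using min_deg unfolding d_def by (rule smallomegaD)
  moreover have "eventually (\<lambda>n. 3 \<le> n) sequentially"
    by (rule eventually_ge_at_top)
  ultimately have lower: "eventually (\<lambda>n. 1 - Suc N / n \<le> prob_tau_le k p (E n) n (Suc N)) sequentially"
  proof eventually_elim
    case (elim n)
    have "1 \<le> n" using elim(2) by simp
    have "0 < ln (real n)" using elim(2) by simp
    then have "ln (real n) / \<epsilon>^2 \<le> d n"
      using elim(1) by simp
    then have ln_le: "ln (real n) \<le> \<epsilon>^2 * d n"
      using \<open>0 < \<epsilon>\<close> by (simp add: pos_divide_le_eq mult.commute)
    then have "0 < d n"
      using \<open>0 < ln (real n)\<close> by (cases "d n") auto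
    have deg: "d n \<le> deg (E n) n w" if "w \<in> {1..n}" for w
      unfolding d_def using that by (intro Min_le) auto
    have "n * exp (-2 * (\<epsilon>^2 * d n)) \<le> 1 / n"
      using mult_exp_le_inverse[of "real n" "\<epsilon>^2 * d n"] ln_le elim(2) by simp
    then have "Suc N * (n * exp (-2 * \<epsilon>^2 * d n)) \<le> Suc N * (1 / n)"
      by (intro mult_left_mono) (simp_all add: mult.assoc)
    moreover have "1 - Suc N * (n * exp (-2 * \<epsilon>^2 * d n)) \<le> prob_tau_le k p (E n) n (Suc N)"
      unfolding \<epsilon>_def
      using prob_tau_le_lower_bound[OF k p N drift simple[rule_format] \<open>1 \<le> n\<close> \<open>0 < d n\<close> deg] .
    ultimately show ?case by simp
  qed
  have upper: "eventually (\<lambda>n. prob_tau_le k p (E n) n (Suc N) \<le> 1) sequentially"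
    by (simp add: prob_tau_le_def)
  have "(\<lambda>n. 1 - real (Suc N) / real n) \<longlonglongrightarrow> 1 - 0"
    by (intro tendsto_intros lim_const_over_n)
  then show ?thesis
    using tendsto_sandwich[OF lower upper] by simp
qed

theorem corollary5p8:
  fixes k :: nat and p :: real
  assumes "odd k" and "k \<ge> 3" and "pstar k < p" and "p \<le> 1"
  shows "\<exists>T::nat. \<forall>E :: nat \<Rightarrow> nat \<Rightarrow> nat \<Rightarrow> bool.
           (\<forall>n. simple_graph n (E n)) \<and>
           (\<lambda>n. real (Min (deg (E n) n ` {1..n}))) \<in> \<omega>(\<lambda>n. ln (real n))
           \<longrightarrow> (\<lambda>n. prob_tau_le k p (E n) n T) \<longlonglongrightarrow> 1"
proof -
  obtain m where k: "k = Suc (2*m)" using assms(1) by (metis oddE Suc_eq_plus1)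
  have "0 \<le> p" using pstar_ge[OF assms(1,2)] assms(3) by linarith
  obtain N :: nat where "1 \<le> N" and drift: "\<And>x. 1/2 \<le> x \<Longrightarrow> x \<le> 1 \<Longrightarrow> F p k x \<le> x - 1/N"
    using F_below_diagonal[OF assms] by blast
  show ?thesis
  proof (intro exI[of _ "Suc N"] allI impI)
    fix E :: "nat \<Rightarrow> nat \<Rightarrow> nat \<Rightarrow> bool"
    assume "(\<forall>n. simple_graph n (E n)) \<and>
      (\<lambda>n. real (Min (deg (E n) n ` {1..n}))) \<in> \<omega>(\<lambda>n. ln (real n))"
    then show "(\<lambda>n. prob_tau_le k p (E n) n (Suc N)) \<longlonglongrightarrow> 1"
      using prob_tau_le_tendsto_1[OF k \<open>0 \<le> p\<close> assms(4) \<open>1 \<le> N\<close> drift] by blast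
  qed
qed

end
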